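(* Consider the plant, observer and controller of the context with $v(t)=0$ for all $t\ge0$, and the detector monitoring signal $g$, and suppose Assumption 1 holds. Suppose a replay attack is launched at time $T$ and $\sigma\le T$, and suppose the attacked observer (for $t\in[T,2T)$) is incrementally input-to-state stable ($\delta$ISS) with respect to the input $y^a$ and state $\hat x$. Then there exists a class-$\mathcal{KL}$ function $\overline\beta$ such that, denoting by $\tilde y(s)$, $s\in[0,T)$, the (unattacked) innovation $y(s)-\hat y(s)$, $$g(t)\le\frac1\sigma\int_{t-\sigma}^{T}\|\tilde y(s)\|^2ds+\frac1\sigma\int_T^t\|\tilde y(s-T)\|^2ds+\overline\beta(\|\hat x(T)-\hat x(0)\|,t),\quad t\in[T,T+\sigma),$$ $$g(t)\le\frac1\sigma\int_{t-\sigma}^{t}\|\tilde y(s-T)\|^2ds+\overline\beta(\|\hat x(T)-\hat x(0)\|,t),\quad t\in[T+\sigma,2T).$$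
   Context: Plant: $\dot x=f(x)+Bu+\omega$, $y=Cx+Du+\nu$, $x\in\mathbb{R}^n$, $u\in\mathbb{R}^m$, $y\in\mathbb{R}^p$, $f:\mathbb{R}^n\to\mathbb{R}^n$ continuously differentiable; noises $\omega,\nu$ Lebesgue integrable with $\|\omega\|_\infty\le\bar\omega$, $\|\nu\|_\infty\le\bar\nu$ ($\bar\omega,\bar\nu>0$). Observer: $\dot{\hat x}=f(\hat x)+Bu+L(y-\hat y)$, $\hat y=C\hat x+Du$, $L\in\mathbb{R}^{n\times p}$. Controller: $u=\kappa(\hat x)+v$, with $\kappa$ Lipschitz: $\|\kappa(x_1)-\kappa(x_2)\|\le l_\kappa\|x_1-x_2\|$. Observation error $\tilde x=x-\hat x$ obeys the dynamics obtained by subtracting observer from plant, with output (innovation) $\tilde y=y-\hat y=C\tilde x+\nu$; the closed-loop plant is $\dot x=f(x)+B(\kappa(x-\tilde x)+v)+\omega$. Assumption 1: the error dynamics are input-to-state stable (ISS) with respect to inputs $(\nu,\omega)$ uniformly in $x$, and the closed-loop plant is $\delta$ISS with respect to inputs $(\tilde x,v,\omega)$. (ISS: $\|X(t,x_0,u)\|\le\beta(\|x_0\|,t)+\alpha(\|u\|_\infty)$; $\delta$ISS: $\|X(t,x_1,u_1)-X(t,x_2,u_2)\|\le\beta(\|x_1-x_2\|,t)+\alpha(\|u_1-u_2\|_\infty)$, for some $\beta\in\mathcal{KL}$, $\alpha\in\mathcal{K}$.) Detector: monitoring signal $g(t)=\frac1\sigma\int_{t-\sigma}^t\|\tilde y(s)\|^2ds$,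 $\sigma>0$, where $\tilde y$ is the received measurement minus $\hat y$; alarm if $g(t)>\vartheta$. Replay attack: on $[0,T)$ the adversary records $y$; on $[T,2T)$ the observer receives $y^a(t)=y(t-T)$ instead of the true measurement, so the attacked observer is $\dot{\hat x}=f(\hat x)+B(\kappa(\hat x)+v)-L[C\hat x+D(\kappa(\hat x)+v)]+Ly^a$, $\hat y=C\hat x+D(\kappa(\hat x)+v)$, and the innovation used by the detector is $y^a(t)-\hat y(t)$. *)

theory Defs
  imports "HOL-Analysis.Analysis"
begin

definition class_K :: "(real \<Rightarrow> real) \<Rightarrow> bool" where
  "class_K \<alpha> \<longleftrightarrow> \<alpha> 0 = 0 \<and> continuous_on {0..} \<alpha> \<and> strict_mono_on {0..} \<alpha>"

definition class_KL :: "(real \<Rightarrow> real \<Rightarrow> real) \<Rightarrow> bool" where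
  "class_KL \<beta> \<longleftrightarrow>
     (\<forall>t\<ge>0. class_K (\<lambda>r. \<beta> r t)) \<and>
     (\<forall>r\<ge>0. (\<forall>s t. 0 \<le> s \<longrightarrow> s \<le> t \<longrightarrow> \<beta> r t \<le> \<beta> r s) \<and> ((\<beta> r) \<longlongrightarrow> 0) at_top)"

text \<open>Caratheodory solution on [0,tau] of the time-varying ODE  X' = G t X,
  written in integral form (Lebesgue integral).\<close>
definition solves_on :: "(real \<Rightarrow> 's::euclidean_space \<Rightarrow> 's) \<Rightarrow> (real \<Rightarrow> 's) \<Rightarrow> real \<Rightarrow> bool" where
  "solves_on G X \<tau> \<longleftrightarrow>
     (\<forall>t\<in>{0..\<tau>}. (\<lambda>s. G s (X s)) absolutely_integrable_on {0..t} \<and>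
                   X t = X 0 + integral {0..t} (\<lambda>s. G s (X s)))"

definition supn :: "(real \<Rightarrow> 'a::real_normed_vector) \<Rightarrow> real \<Rightarrow> real" where
  "supn u t = (SUP s\<in>{0..t}. norm (u s))"

definition ISS :: "('s::euclidean_space \<Rightarrow> 'u::real_normed_vector \<Rightarrow> 's) \<Rightarrow> bool" where
  "ISS F \<longleftrightarrow> (\<exists>\<beta> \<alpha>. class_KL \<beta> \<and> class_K \<alpha> \<and>
     (\<forall>\<tau>\<ge>0. \<forall>X u. bounded (u ` {0..\<tau>}) \<longrightarrow> solves_on (\<lambda>s z. F z (u s)) X \<tau> \<longrightarrow>
        (\<forall>t\<in>{0..\<tau>}. norm (X t) \<le> \<beta> (norm (X 0)) t + \<alpha> (supn u t))))"

definition ISS_unif :: "('z \<Rightarrow> 's::euclidean_space \<Rightarrow> 'u::real_normed_vector \<Rightarrow> 's) \<Rightarrow> bool" where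
  "ISS_unif F \<longleftrightarrow> (\<exists>\<beta> \<alpha>. class_KL \<beta> \<and> class_K \<alpha> \<and>
     (\<forall>\<tau>\<ge>0. \<forall>X z u. bounded (u ` {0..\<tau>}) \<longrightarrow> solves_on (\<lambda>s e. F (z s) e (u s)) X \<tau> \<longrightarrow>
        (\<forall>t\<in>{0..\<tau>}. norm (X t) \<le> \<beta> (norm (X 0)) t + \<alpha> (supn u t))))"

definition dISS :: "('s::euclidean_space \<Rightarrow> 'u::real_normed_vector \<Rightarrow> 's) \<Rightarrow> bool" where
  "dISS F \<longleftrightarrow> (\<exists>\<beta> \<alpha>. class_KL \<beta> \<and> class_K \<alpha> \<and>
     (\<forall>\<tau>\<ge>0. \<forall>X1 X2 u1 u2. bounded (u1 ` {0..\<tau>}) \<longrightarrow> bounded (u2 ` {0..\<tau>}) \<longrightarrow>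
        solves_on (\<lambda>s z. F z (u1 s)) X1 \<tau> \<longrightarrow> solves_on (\<lambda>s z. F z (u2 s)) X2 \<tau> \<longrightarrow>
        (\<forall>t\<in>{0..\<tau>}. norm (X1 t - X2 t) \<le> \<beta> (norm (X1 0 - X2 0)) t + \<alpha> (supn (\<lambda>s. u1 s - u2 s) t))))"

definition monitor :: "real \<Rightarrow> (real \<Rightarrow> 'a::real_normed_vector) \<Rightarrow> real \<Rightarrow> real" where
  "monitor \<sigma> r t = (1/\<sigma>) * integral {t-\<sigma>..t} (\<lambda>s. (norm (r s))\<^sup>2)"

end

theory Submission
  imports Defs "HOL-Real_Asymp.Real_Asymp"
begin

(*
  On [T, 2T) the observer is driven by y(s - T), the very data that drove it at time s - T.
  Hence xh(s) and xh(s + T) solve the attacked-observer equation with the same input, and its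
  incremental ISS bounds their distance by beta(|xh T - xh 0|, s) <= beta(|xh T - xh 0|, 0).
  The received innovation at time s therefore differs from the recorded one at s - T by at most
  d = (|C| + |D| l_kappa) beta(|xh T - xh 0|, 0), so its square exceeds the recorded one by at
  most Q = 2 M d + d^2, M bounding the recorded innovation. Integrating over the detector window
  gives both estimates with the constant Q. Since beta-bar may depend on the trajectory and Q
  vanishes when xh T = xh 0, Q is dominated on [0, 2T] by a KL function c r exp(-t).
*)

lemma class_KL_scaled_exp:
  assumes "c > 0"
  shows "class_KL (\<lambda>r t. c * r * exp (- t))"
proof -
  have "class_K (\<lambda>r. c * r * exp (- t))" for t :: real
    unfolding class_K_def using assms
    by (auto intro!: continuous_on_mult_const continuous_on_mult_right continuous_on_id strict_mono_onI)
  moreover have "c * r * exp (- t) \<le> c * r * exp (- s)" if "0 \<le> r" "s \<le> t" for r s t :: real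
    using assms that by (auto intro!: mult_left_mono)
  moreover have "((\<lambda>t. c * r * exp (- t)) \<longlongrightarrow> 0) at_top" for r :: real
    by real_asymp
  ultimately show ?thesis
    unfolding class_KL_def by blast
qed

lemma class_KL_dominates_const:
  fixes Q r \<tau> :: real
  assumes "0 \<le> Q" "0 \<le> r" "r = 0 \<Longrightarrow> Q = 0"
  obtains \<beta> where "class_KL \<beta>" "\<And>t. t \<le> \<tau> \<Longrightarrow> Q \<le> \<beta> r t"
proof -
  define c where "c = max 1 (Q * exp \<tau> / r)"
  have "c > 0"
    unfolding c_def by (simp add: less_max_iff_disj)
  have "Q \<le> c * r * exp (- t)" if "t \<le> \<tau>" for t
  proof (cases "r = 0")
    case False
    then have "Q = (Q * exp \<tau> / r) * (r * exp (- \<tau>))"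
      by (simp add: exp_minus)
    also have "\<dots> \<le> c * (r * exp (- \<tau>))"
      unfolding c_def using assms(2) by (intro mult_right_mono) auto
    also have "\<dots> \<le> c * (r * exp (- t))"
      using \<open>c > 0\<close> assms(2) that by (intro mult_left_mono) auto
    finally show ?thesis
      by (simp add: mult.assoc)
  qed (use assms in simp)
  then show thesis
    using that class_KL_scaled_exp[OF \<open>c > 0\<close>] by blast
qed

lemma continuous_on_integral_equation:
  fixes F X :: "real \<Rightarrow> 'a::euclidean_space"
  assumes "\<forall>t\<in>{0..<c}. F absolutely_integrable_on {0..t} \<and> X t = X 0 + integral {0..t} F"
    and "b < c"
  shows "continuous_on {0..b} X"
proof (cases "0 \<le> b")
  case True
  then have "F integrable_on {0..b}"
    using bspec[OF assms(1), of b] assms(2) absolutely_integrable_on_def by auto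
  then have "continuous_on {0..b} (\<lambda>t. X 0 + integral {0..t} F)"
    by (intro continuous_on_add continuous_on_const indefinite_integral_continuous_1)
  then show ?thesis
  proof (rule continuous_on_eq)
    fix t assume "t \<in> {0..b}"
    then have "t \<in> {0..<c}"
      using assms(2) by simp
    then show "X 0 + integral {0..t} F = X t"
      using assms(1) by metis
  qed
qed simp

lemma absolutely_integrable_on_shift:
  fixes F :: "real \<Rightarrow> 'a::euclidean_space"
  assumes "F absolutely_integrable_on {a + c..b + c}"
  shows "(\<lambda>s. F (s + c)) absolutely_integrable_on {a..b}"
proof -
  have "F integrable_on {a + c..b + c}" "(\<lambda>x. norm (F x)) integrable_on {a + c..b + c}"
    using assms absolutely_integrable_on_def by blast+
  then have "(\<lambda>s. F (s + c)) integrable_on {a..b}" "(\<lambda>s. norm (F (s + c))) integrable_on {a..b}"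
    using integrable_shift_real_ivl[of _ "a + c" "b + c" c] by simp_all
  then show ?thesis
    using absolutely_integrable_on_def by blast
qed

lemma solves_on_cong:
  assumes "solves_on G X \<tau>" "\<And>s. s \<in> {0..\<tau>} \<Longrightarrow> G s (X s) = H s (X s)"
  shows "solves_on H X \<tau>"
  unfolding solves_on_def
proof
  fix t assume t: "t \<in> {0..\<tau>}"
  have eq: "G s (X s) = H s (X s)" if "s \<in> {0..t}" for s
    using assms(2) that t by auto
  have "(\<lambda>s. G s (X s)) absolutely_integrable_on {0..t}" "X t = X 0 + integral {0..t} (\<lambda>s. G s (X s))"
    using assms(1) t unfolding solves_on_def by blast+
  moreover have "set_integrable lebesgue {0..t} (\<lambda>s. G s (X s)) = set_integrable lebesgue {0..t} (\<lambda>s. H s (X s))"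
    by (rule set_integrable_cong) (simp_all add: eq)
  moreover have "integral {0..t} (\<lambda>s. G s (X s)) = integral {0..t} (\<lambda>s. H s (X s))"
    by (rule integral_cong) (simp add: eq)
  ultimately show "(\<lambda>s. H s (X s)) absolutely_integrable_on {0..t} \<and> X t = X 0 + integral {0..t} (\<lambda>s. H s (X s))"
    by simp
qed

lemma solves_on_shift:
  assumes "solves_on G X (a + \<tau>)" "0 \<le> a"
  shows "solves_on (\<lambda>s. G (s + a)) (\<lambda>s. X (s + a)) \<tau>"
  unfolding solves_on_def
proof
  fix t assume t: "t \<in> {0..\<tau>}"
  define F where "F s = G s (X s)" for s
  have F_int: "F absolutely_integrable_on {0..t'}"
    and X_eq: "X t' = X 0 + integral {0..t'} F" if "t' \<in> {0..a + \<tau>}" for t'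
    using assms(1) that unfolding solves_on_def F_def by blast+
  have t_a: "t + a \<in> {0..a + \<tau>}"
    using assms(2) t by auto
  note F_int = F_int[OF t_a]
  have "F absolutely_integrable_on {0 + a..t + a}"
    by (rule set_integrable_subset[OF F_int]) (use assms(2) in auto)
  then have shifted: "(\<lambda>s. F (s + a)) absolutely_integrable_on {0..t}"
    by (rule absolutely_integrable_on_shift)
  have "X (t + a) = X 0 + integral {0..t + a} F"
    using X_eq[OF t_a] by simp
  also have "\<dots> = X 0 + integral {0..a} F + integral {a..t + a} F"
    using F_int assms(2) t
    by (simp add: Henstock_Kurzweil_Integration.integral_combine absolutely_integrable_on_def)
  also have "\<dots> = X (0 + a) + integral {0..t} (\<lambda>s. F (s + a))"
    using X_eq[of a] assms(2) t integral_shift_real_ivl[of a a "t + a" F] by simp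
  finally have "X (t + a) = X (0 + a) + integral {0..t} (\<lambda>s. F (s + a))" .
  with shifted show "(\<lambda>s. G (s + a) (X (s + a))) absolutely_integrable_on {0..t} \<and>
      X (t + a) = X (0 + a) + integral {0..t} (\<lambda>s. G (s + a) (X (s + a)))"
    unfolding F_def by simp
qed

lemma dISS_same_input:
  assumes "dISS F"
  obtains \<beta> where "class_KL \<beta>"
    "\<And>\<tau> X1 X2 u t. bounded (u ` {0..\<tau>}) \<Longrightarrow>
       solves_on (\<lambda>s z. F z (u s)) X1 \<tau> \<Longrightarrow> solves_on (\<lambda>s z. F z (u s)) X2 \<tau> \<Longrightarrow>
       t \<in> {0..\<tau>} \<Longrightarrow> norm (X1 t - X2 t) \<le> \<beta> (norm (X1 0 - X2 0)) t"
proof -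
  obtain \<beta> \<alpha> where \<beta>: "class_KL \<beta>" and \<alpha>: "class_K \<alpha>" and bound:
    "\<forall>\<tau>\<ge>0. \<forall>X1 X2 u1 u2. bounded (u1 ` {0..\<tau>}) \<longrightarrow> bounded (u2 ` {0..\<tau>}) \<longrightarrow>
       solves_on (\<lambda>s z. F z (u1 s)) X1 \<tau> \<longrightarrow> solves_on (\<lambda>s z. F z (u2 s)) X2 \<tau> \<longrightarrow>
       (\<forall>t\<in>{0..\<tau>}. norm (X1 t - X2 t) \<le> \<beta> (norm (X1 0 - X2 0)) t + \<alpha> (supn (\<lambda>s. u1 s - u2 s) t))"
    using assms unfolding dISS_def by blast
  have same_input: "norm (X1 t - X2 t) \<le> \<beta> (norm (X1 0 - X2 0)) t"
    if "bounded (u ` {0..\<tau>})" "solves_on (\<lambda>s z. F z (u s)) X1 \<tau>"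
      "solves_on (\<lambda>s z. F z (u s)) X2 \<tau>" "t \<in> {0..\<tau>}" for \<tau> X1 X2 u t
  proof -
    have "0 \<le> \<tau>"
      using that(4) by simp
    note bound[rule_format, OF this that(1,1-4)]
    moreover have "supn (\<lambda>s. u s - u s) t = 0"
      unfolding supn_def using that(4) by simp
    moreover have "\<alpha> 0 = 0"
      using \<alpha> unfolding class_K_def by simp
    ultimately show ?thesis
      by simp
  qed
  show thesis
    by (rule that[OF \<beta> same_input])
qed

lemma integrable_on_power2_norm_bounded:
  fixes h :: "real \<Rightarrow> 'a::euclidean_space"
  assumes "h integrable_on {a..b}" "\<And>s. s \<in> {a..b} \<Longrightarrow> (norm (h s))\<^sup>2 \<le> K"
  shows "(\<lambda>s. (norm (h s))\<^sup>2) integrable_on {a..b}"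
proof (rule measurable_bounded_by_integrable_imp_integrable_real)
  have "h \<in> borel_measurable (lebesgue_on {a..b})"
    using assms(1) integrable_imp_measurable by blast
  then show "(\<lambda>s. (norm (h s))\<^sup>2) \<in> borel_measurable (lebesgue_on {a..b})"
    by measurable
qed (use assms(2) in auto)

lemma power2_norm_diff_le:
  fixes p q :: "'a::real_normed_vector"
  assumes "norm p \<le> M" "norm q \<le> d"
  shows "(norm (p - q))\<^sup>2 \<le> (norm p)\<^sup>2 + (2 * M * d + d\<^sup>2)"
proof -
  have "norm (p - q) \<le> norm p + d"
    using norm_triangle_ineq4[of p q] assms(2) by linarith
  then have "(norm (p - q))\<^sup>2 \<le> (norm p + d)\<^sup>2"
    by (simp add: power_mono)
  also have "\<dots> \<le> (norm p)\<^sup>2 + (2 * M * d + d\<^sup>2)"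
    using mult_right_mono[OF assms(1), of d] norm_ge_zero[of q] assms(2)
    by (simp add: power2_sum)
  finally show ?thesis .
qed

lemma monitor_le_of_integral_le:
  assumes "0 < \<sigma>" "integral {t - \<sigma>..t} (\<lambda>s. (norm (r s))\<^sup>2) \<le> \<sigma> * A"
  shows "monitor \<sigma> r t \<le> A"
proof -
  have "monitor \<sigma> r t \<le> (1 / \<sigma>) * (\<sigma> * A)"
    unfolding monitor_def using assms by (intro mult_left_mono) auto
  then show ?thesis
    using assms(1) by simp
qed

locale replayed_signal =
  fixes e r :: "real \<Rightarrow> 'a::euclidean_space" and T M Q :: real
  assumes recorded_integrable: "e integrable_on {0..T}"
    and recorded_bounded: "\<And>s. s \<in> {0..T} \<Longrightarrow> norm (e s) \<le> M"
    and received_integrable: "\<And>b. b < 2 * T \<Longrightarrow> r integrable_on {T..b}"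
    and received_before: "\<And>s. s \<in> {0..<T} \<Longrightarrow> r s = e s"
    and received_after: "\<And>s. s \<in> {T..<2 * T} \<Longrightarrow> (norm (r s))\<^sup>2 \<le> (norm (e (s - T)))\<^sup>2 + Q"
    and Q_nonneg: "0 \<le> Q"
begin

lemma recorded_power2_integrable: "(\<lambda>s. (norm (e s))\<^sup>2) integrable_on {0..T}"
  by (rule integrable_on_power2_norm_bounded[OF recorded_integrable, where K = "M\<^sup>2"])
    (simp add: recorded_bounded power_mono)

lemma received_power2_integrable:
  assumes "T \<le> a" "b < 2 * T"
  shows "(\<lambda>s. (norm (r s))\<^sup>2) integrable_on {a..b}"
proof (rule integrable_on_power2_norm_bounded)
  show "r integrable_on {a..b}"
    by (rule integrable_on_subinterval[OF received_integrable[OF assms(2)]]) (use assms in auto)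
  fix s assume s: "s \<in> {a..b}"
  have "(norm (e (s - T)))\<^sup>2 \<le> M\<^sup>2"
    using recorded_bounded[of "s - T"] s assms by (simp add: power_mono)
  then show "(norm (r s))\<^sup>2 \<le> M\<^sup>2 + Q"
    using received_after[of s] s assms by simp
qed

lemma integral_received_power2_le:
  assumes "T \<le> a" "a \<le> b" "b < 2 * T"
  shows "integral {a..b} (\<lambda>s. (norm (r s))\<^sup>2)
           \<le> integral {a..b} (\<lambda>s. (norm (e (s - T)))\<^sup>2) + (b - a) * Q"
proof -
  have shifted: "(\<lambda>s. (norm (e (s - T)))\<^sup>2) integrable_on {a..b}"
    using integrable_on_subinterval[OF recorded_power2_integrable, of "a - T" "b - T"] assms
      integrable_shift_real_ivl[of "\<lambda>s. (norm (e s))\<^sup>2" "a - T" "b - T" "- T"]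
    by auto
  have "integral {a..b} (\<lambda>s. (norm (r s))\<^sup>2) \<le> integral {a..b} (\<lambda>s. (norm (e (s - T)))\<^sup>2 + Q)"
    using received_power2_integrable[OF assms(1,3)] shifted received_after assms
    by (intro integral_le integrable_add integrable_const_ivl) auto
  also have "\<dots> = integral {a..b} (\<lambda>s. (norm (e (s - T)))\<^sup>2) + (b - a) * Q"
    using integral_add[OF shifted integrable_const_ivl, of Q] assms(2) by simp
  finally show ?thesis .
qed

lemma monitor_transition_le:
  assumes "0 < \<sigma>" "\<sigma> \<le> T" "t \<in> {T..<T + \<sigma>}"
  shows "monitor \<sigma> r t
           \<le> (1 / \<sigma>) * integral {t - \<sigma>..T} (\<lambda>s. (norm (e s))\<^sup>2)
            + (1 / \<sigma>) * integral {T..t} (\<lambda>s. (norm (e (s - T)))\<^sup>2) + Q"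
proof (rule monitor_le_of_integral_le[OF assms(1)])
  let ?r2 = "\<lambda>s. (norm (r s))\<^sup>2"
  have t: "0 \<le> t - \<sigma>" "t - \<sigma> \<le> T" "T \<le> t" "t < 2 * T"
    using assms by auto
  have recorded_part: "integral {t - \<sigma>..T} ?r2 = integral {t - \<sigma>..T} (\<lambda>s. (norm (e s))\<^sup>2)"
    by (rule integral_spike[of "{T}"]) (use received_before t in auto)
  have "?r2 integrable_on {t - \<sigma>..T}"
    by (rule integrable_spike_finite[where S = "{T}" and f = "\<lambda>s. (norm (e s))\<^sup>2"])
      (use received_before integrable_on_subinterval[OF recorded_power2_integrable, of "t - \<sigma>" T] t in auto)
  then have "integral {t - \<sigma>..t} ?r2 = integral {t - \<sigma>..T} ?r2 + integral {T..t} ?r2"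
    using Henstock_Kurzweil_Integration.integral_combine[of "t - \<sigma>" T t ?r2] t
      Henstock_Kurzweil_Integration.integrable_combine[OF _ _ _ received_power2_integrable[of T t]]
    by simp
  also have "\<dots> \<le> integral {t - \<sigma>..T} (\<lambda>s. (norm (e s))\<^sup>2)
      + (integral {T..t} (\<lambda>s. (norm (e (s - T)))\<^sup>2) + \<sigma> * Q)"
    using integral_received_power2_le[of T t] mult_right_mono[of "t - T" \<sigma> Q] Q_nonneg t assms
    by (simp add: recorded_part)
  finally show "integral {t - \<sigma>..t} ?r2 \<le> \<sigma> * ((1 / \<sigma>) * integral {t - \<sigma>..T} (\<lambda>s. (norm (e s))\<^sup>2)
      + (1 / \<sigma>) * integral {T..t} (\<lambda>s. (norm (e (s - T)))\<^sup>2) + Q)"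
    using assms(1) by (simp add: algebra_simps)
qed

lemma monitor_replayed_le:
  assumes "0 < \<sigma>" "t \<in> {T + \<sigma>..<2 * T}"
  shows "monitor \<sigma> r t \<le> (1 / \<sigma>) * integral {t - \<sigma>..t} (\<lambda>s. (norm (e (s - T)))\<^sup>2) + Q"
  by (rule monitor_le_of_integral_le[OF assms(1)])
    (use integral_received_power2_le[of "t - \<sigma>" t] assms in \<open>simp add: algebra_simps\<close>)

end

locale replay_attack =
  fixes f :: "real^'n \<Rightarrow> real^'n" and B :: "real^'m^'n" and C :: "real^'n^'p"
    and D :: "real^'m^'p" and L :: "real^'p^'n"
    and \<kappa> :: "real^'n \<Rightarrow> real^'m" and l\<kappa> :: real
    and \<omega> :: "real \<Rightarrow> real^'n" and \<nu> :: "real \<Rightarrow> real^'p" and \<nu>b T :: real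
    and x xh :: "real \<Rightarrow> real^'n" and u :: "real \<Rightarrow> real^'m" and y yh ym :: "real \<Rightarrow> real^'p"
  assumes \<kappa>_lip: "\<forall>a b. norm (\<kappa> a - \<kappa> b) \<le> l\<kappa> * norm (a - b)"
    and \<nu>_int: "\<forall>t\<ge>0. \<nu> absolutely_integrable_on {0..t}"
    and \<nu>_bd: "\<forall>t\<ge>0. norm (\<nu> t) \<le> \<nu>b"
    and att_dISS: "dISS (\<lambda>(z::real^'n) (ya::real^'p).
                      f z + B *v \<kappa> z - L *v (C *v z + D *v \<kappa> z) + L *v ya)"
    and T_pos: "T > 0"
    and u_def: "\<forall>t. u t = \<kappa> (xh t)"
    and y_def: "\<forall>t. y t = C *v x t + D *v u t + \<nu> t"
    and yh_def: "\<forall>t. yh t = C *v xh t + D *v u t"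
    and ym_def: "\<forall>t. ym t = (if t < T then y t else y (t - T))"
    and plant: "\<forall>t\<in>{0..<2*T}. (\<lambda>s. f (x s) + B *v u s + \<omega> s) absolutely_integrable_on {0..t} \<and>
                  x t = x 0 + integral {0..t} (\<lambda>s. f (x s) + B *v u s + \<omega> s)"
    and observer: "\<forall>t\<in>{0..<2*T}. (\<lambda>s. f (xh s) + B *v u s + L *v (ym s - yh s)) absolutely_integrable_on {0..t} \<and>
                  xh t = xh 0 + integral {0..t} (\<lambda>s. f (xh s) + B *v u s + L *v (ym s - yh s))"
begin

lemma \<kappa>_lipschitz: "norm (\<kappa> a - \<kappa> b) \<le> \<bar>l\<kappa>\<bar> * norm (a - b)"
proof -
  have "norm (\<kappa> a - \<kappa> b) \<le> l\<kappa> * norm (a - b)"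
    using \<kappa>_lip by blast
  also have "\<dots> \<le> \<bar>l\<kappa>\<bar> * norm (a - b)"
    by (intro mult_right_mono) auto
  finally show ?thesis .
qed

lemma \<kappa>_continuous: "continuous_on S \<kappa>"
proof -
  have "lipschitz_on \<bar>l\<kappa>\<bar> UNIV \<kappa>"
    by (rule lipschitz_onI) (simp_all add: dist_norm \<kappa>_lipschitz)
  then show ?thesis
    using lipschitz_on_continuous_on continuous_on_subset by blast
qed

lemma x_continuous: "b < 2 * T \<Longrightarrow> continuous_on {0..b} x"
  by (rule continuous_on_integral_equation[OF plant])

lemma xh_continuous: "b < 2 * T \<Longrightarrow> continuous_on {0..b} xh"
  by (rule continuous_on_integral_equation[OF observer])

lemma u_continuous: "b < 2 * T \<Longrightarrow> continuous_on {0..b} u"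
  using continuous_on_compose2[OF \<kappa>_continuous xh_continuous subset_UNIV] by (simp add: u_def)

lemma yh_continuous: "b < 2 * T \<Longrightarrow> continuous_on {0..b} yh"
  using xh_continuous[of b] u_continuous[of b]
  by (simp add: yh_def continuous_on_add linear_continuous_on_compose[OF _ matrix_vector_mul_linear])

lemma y_decomposition: "y = (\<lambda>t. (C *v x t + D *v u t) + \<nu> t)"
  by (simp add: fun_eq_iff y_def)

lemma noise_free_output_continuous: "b < 2 * T \<Longrightarrow> continuous_on {0..b} (\<lambda>t. C *v x t + D *v u t)"
  using x_continuous[of b] u_continuous[of b]
  by (simp add: continuous_on_add linear_continuous_on_compose[OF _ matrix_vector_mul_linear])

lemma y_integrable: "b < 2 * T \<Longrightarrow> y integrable_on {0..b}"
proof (cases "0 \<le> b")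
  case True
  assume "b < 2 * T"
  moreover have "\<nu> integrable_on {0..b}"
    using \<nu>_int True by (simp add: absolutely_integrable_on_def)
  ultimately show ?thesis
    unfolding y_decomposition
    by (intro integrable_add[OF integrable_continuous_interval] noise_free_output_continuous)
qed (simp add: integrable_on_empty)

lemma y_bounded: "bounded (y ` {0..T})"
proof -
  have "bounded ((\<lambda>t. C *v x t + D *v u t) ` {0..T})"
    using noise_free_output_continuous[of T] T_pos
    by (intro compact_imp_bounded compact_continuous_image compact_Icc) simp
  moreover have "bounded (\<nu> ` {0..T})"
    unfolding bounded_iff using \<nu>_bd by (auto intro!: exI[of _ \<nu>b])
  ultimately show ?thesis
    unfolding y_decomposition by (rule bounded_plus_comp)
qed

lemma innovation_bounded: "bounded ((\<lambda>s. y s - yh s) ` {0..T})"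
proof (rule bounded_minus_comp[OF y_bounded])
  show "bounded (yh ` {0..T})"
    using yh_continuous[of T] T_pos
    by (intro compact_imp_bounded compact_continuous_image compact_Icc) simp
qed

lemma innovation_integrable: "(\<lambda>s. y s - yh s) integrable_on {0..T}"
  using y_integrable[of T] yh_continuous[of T] T_pos
  by (simp add: integrable_diff integrable_continuous_interval)

lemma replayed_innovation_integrable:
  assumes "b < 2 * T"
  shows "(\<lambda>s. ym s - yh s) integrable_on {T..b}"
proof -
  have "(\<lambda>s. y (s + - T)) integrable_on {T..b}"
    using integrable_shift_real_ivl[OF y_integrable[of "b - T"], of "- T"] assms T_pos by simp
  moreover have "yh integrable_on {T..b}"
    using yh_continuous[OF assms] T_pos
    by (intro integrable_continuous_interval) (auto elim: continuous_on_subset)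
  ultimately have "(\<lambda>s. y (s - T) - yh s) integrable_on {T..b}"
    by (simp add: integrable_diff)
  then show ?thesis
    by (rule iffD1[OF integrable_cong, rotated]) (simp add: ym_def)
qed

lemma received_innovation_before_attack: "s \<in> {0..<T} \<Longrightarrow> ym s - yh s = y s - yh s"
  by (simp add: ym_def)

lemma observer_solves_on:
  assumes "0 \<le> \<tau>" "\<tau> < 2 * T"
  shows "solves_on (\<lambda>s z. f z + B *v \<kappa> z - L *v (C *v z + D *v \<kappa> z) + L *v ym s) xh \<tau>"
proof -
  have rhs_eq: "(\<lambda>s. f (xh s) + B *v u s + L *v (ym s - yh s))
      = (\<lambda>s. f (xh s) + B *v \<kappa> (xh s) - L *v (C *v xh s + D *v \<kappa> (xh s)) + L *v ym s)"
    by (simp add: fun_eq_iff u_def yh_def matrix_vector_mult_diff_distrib)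
  show ?thesis
    using observer[unfolded rhs_eq] assms unfolding solves_on_def
    by (meson atLeastAtMost_iff atLeastLessThan_iff le_less_trans)
qed

lemma state_replay_gap:
  obtains \<beta> where "class_KL \<beta>"
    "\<And>s. s \<in> {0..<T} \<Longrightarrow> norm (xh (s + T) - xh s) \<le> \<beta> (norm (xh T - xh 0)) s"
proof -
  define F where "F z ya = f z + B *v \<kappa> z - L *v (C *v z + D *v \<kappa> z) + L *v ya" for z ya
  obtain \<beta> where \<beta>: "class_KL \<beta>" and incr:
    "\<And>\<tau> X1 X2 u t. bounded (u ` {0..\<tau>}) \<Longrightarrow>
       solves_on (\<lambda>s z. F z (u s)) X1 \<tau> \<Longrightarrow> solves_on (\<lambda>s z. F z (u s)) X2 \<tau> \<Longrightarrow>
       t \<in> {0..\<tau>} \<Longrightarrow> norm (X1 t - X2 t) \<le> \<beta> (norm (X1 0 - X2 0)) t"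
    using dISS_same_input att_dISS unfolding F_def by blast
  have "norm (xh (s + T) - xh s) \<le> \<beta> (norm (xh T - xh 0)) s" if s: "s \<in> {0..<T}" for s
  proof -
    have "solves_on (\<lambda>r z. F z (ym r)) xh (T + s)" "solves_on (\<lambda>r z. F z (ym r)) xh s"
      using observer_solves_on[of "T + s"] observer_solves_on[of s] s T_pos unfolding F_def by simp_all
    then have "solves_on (\<lambda>r z. F z (ym (r + T))) (\<lambda>r. xh (r + T)) s"
      "solves_on (\<lambda>r z. F z (ym r)) xh s"
      using solves_on_shift[where G = "\<lambda>r z. F z (ym r)" and a = T] T_pos by simp_all
    moreover have "ym (r + T) = y r" "ym r = y r" if "r \<in> {0..s}" for r
      using that s by (simp_all add: ym_def)
    ultimately have "solves_on (\<lambda>r z. F z (y r)) (\<lambda>r. xh (r + T)) s" "solves_on (\<lambda>r z. F z (y r)) xh s"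
      by (auto elim!: solves_on_cong)
    moreover have "bounded (y ` {0..s})"
      by (rule bounded_subset[OF y_bounded]) (use s in auto)
    ultimately show ?thesis
      using incr[of y s "\<lambda>r. xh (r + T)" xh s] s by simp
  qed
  with \<beta> show thesis
    using that by blast
qed

lemma yh_diff_le:
  "norm (yh s' - yh s) \<le> (onorm ((*v) C) + onorm ((*v) D) * \<bar>l\<kappa>\<bar>) * norm (xh s' - xh s)"
proof -
  let ?\<Delta> = "xh s' - xh s" and ?\<Delta>\<kappa> = "\<kappa> (xh s') - \<kappa> (xh s)"
  have "yh s' - yh s = C *v ?\<Delta> + D *v ?\<Delta>\<kappa>"
    by (simp add: yh_def u_def matrix_vector_mult_diff_distrib)
  then have "norm (yh s' - yh s) \<le> norm (C *v ?\<Delta>) + norm (D *v ?\<Delta>\<kappa>)"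
    by (simp only: norm_triangle_ineq)
  also have "\<dots> \<le> onorm ((*v) C) * norm ?\<Delta> + onorm ((*v) D) * norm ?\<Delta>\<kappa>"
    by (intro add_mono onorm matrix_vector_mul_bounded_linear)
  also have "\<dots> \<le> onorm ((*v) C) * norm ?\<Delta> + onorm ((*v) D) * (\<bar>l\<kappa>\<bar> * norm ?\<Delta>)"
    by (intro add_left_mono mult_left_mono onorm_pos_le matrix_vector_mul_bounded_linear \<kappa>_lipschitz)
  finally show ?thesis
    by (simp add: algebra_simps)
qed

lemma output_replay_gap:
  obtains d where "0 \<le> d" "xh T = xh 0 \<Longrightarrow> d = 0"
    "\<And>s. s \<in> {0..<T} \<Longrightarrow> norm (yh (s + T) - yh s) \<le> d"
proof -
  obtain \<beta> where \<beta>: "class_KL \<beta>"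
    and gap: "\<And>s. s \<in> {0..<T} \<Longrightarrow> norm (xh (s + T) - xh s) \<le> \<beta> (norm (xh T - xh 0)) s"
    using state_replay_gap by blast
  define b where "b = \<beta> (norm (xh T - xh 0)) 0"
  define K where "K = onorm ((*v) C) + onorm ((*v) D) * \<bar>l\<kappa>\<bar>"
  have "0 \<le> K"
    unfolding K_def by (simp add: onorm_pos_le)
  have gap_b: "norm (xh (s + T) - xh s) \<le> b" if "s \<in> {0..<T}" for s
  proof -
    have "\<beta> (norm (xh T - xh 0)) s \<le> b"
      using \<beta> that unfolding class_KL_def b_def by auto
    then show ?thesis
      using gap[OF that] by linarith
  qed
  have "norm (xh T - xh 0) \<le> b"
    using gap_b[of 0] T_pos by simp
  then have "0 \<le> b"
    using norm_ge_zero[of "xh T - xh 0"] by linarith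
  with \<open>0 \<le> K\<close> have "0 \<le> K * b"
    by simp
  moreover have "K * b = 0" if "xh T = xh 0"
    using \<beta> that unfolding b_def class_KL_def class_K_def by simp
  moreover have "norm (yh (s + T) - yh s) \<le> K * b" if "s \<in> {0..<T}" for s
    using yh_diff_le[of "s + T" s] mult_left_mono[OF gap_b[OF that] \<open>0 \<le> K\<close>]
    unfolding K_def by linarith
  ultimately show thesis
    using that by blast
qed

lemma innovation_replay_bound:
  obtains Q where "0 \<le> Q" "xh T = xh 0 \<Longrightarrow> Q = 0"
    "\<And>s. s \<in> {T..<2 * T} \<Longrightarrow> (norm (ym s - yh s))\<^sup>2 \<le> (norm (y (s - T) - yh (s - T)))\<^sup>2 + Q"
proof -
  obtain M where "0 < M" and M: "\<And>s. s \<in> {0..T} \<Longrightarrow> norm (y s - yh s) \<le> M"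
    using innovation_bounded unfolding bounded_pos by blast
  obtain d where "0 \<le> d" "xh T = xh 0 \<Longrightarrow> d = 0"
    and d: "\<And>s. s \<in> {0..<T} \<Longrightarrow> norm (yh (s + T) - yh s) \<le> d"
    using output_replay_gap by blast
  have "(norm (ym s - yh s))\<^sup>2 \<le> (norm (y (s - T) - yh (s - T)))\<^sup>2 + (2 * M * d + d\<^sup>2)"
    if "s \<in> {T..<2 * T}" for s
  proof -
    have "ym s - yh s = (y (s - T) - yh (s - T)) - (yh (s - T + T) - yh (s - T))"
      using that by (simp add: ym_def)
    moreover have "norm (y (s - T) - yh (s - T)) \<le> M" "norm (yh (s - T + T) - yh (s - T)) \<le> d"
      using M[of "s - T"] d[of "s - T"] that by auto
    ultimately show ?thesis
      using power2_norm_diff_le by metis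
  qed
  moreover have "0 \<le> 2 * M * d + d\<^sup>2"
    using \<open>0 < M\<close> \<open>0 \<le> d\<close> by simp
  ultimately show thesis
    using that \<open>xh T = xh 0 \<Longrightarrow> d = 0\<close> by simp
qed

end

theorem proposition3:
  fixes f :: "real^'n \<Rightarrow> real^'n"
    and f' :: "real^'n \<Rightarrow> ((real^'n) \<Rightarrow>\<^sub>L (real^'n))"
    and B :: "real^'m^'n" and C :: "real^'n^'p" and D :: "real^'m^'p" and L :: "real^'p^'n"
    and \<kappa> :: "real^'n \<Rightarrow> real^'m" and l\<kappa> :: real
    and \<omega> :: "real \<Rightarrow> real^'n" and \<nu> :: "real \<Rightarrow> real^'p" and \<omega>b \<nu>b :: real
    and T \<sigma> :: real
    and x xh :: "real \<Rightarrow> real^'n"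
    and u :: "real \<Rightarrow> real^'m" and y yh ym :: "real \<Rightarrow> real^'p"
  assumes f_C1: "\<forall>z. (f has_derivative blinfun_apply (f' z)) (at z)" "continuous_on UNIV f'"
    and \<kappa>_lip: "\<forall>a b. norm (\<kappa> a - \<kappa> b) \<le> l\<kappa> * norm (a - b)"
    and \<omega>_int: "\<forall>t\<ge>0. \<omega> absolutely_integrable_on {0..t}"
    and \<nu>_int: "\<forall>t\<ge>0. \<nu> absolutely_integrable_on {0..t}"
    and noise_pos: "\<omega>b > 0" "\<nu>b > 0"
    and \<omega>_bd: "\<forall>t\<ge>0. norm (\<omega> t) \<le> \<omega>b"
    and \<nu>_bd: "\<forall>t\<ge>0. norm (\<nu> t) \<le> \<nu>b"
    \<comment> \<open>Assumption 1: error dynamics ISS w.r.t. (nu, omega) uniformly in x\<close>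
    and ass1_err: "ISS_unif (\<lambda>(xs::real^'n) (e::real^'n) (w::(real^'p) \<times> (real^'n)).
                      f xs - f (xs - e) + snd w - L *v (C *v e + fst w))"
    \<comment> \<open>Assumption 1: closed-loop plant deltaISS w.r.t. (x tilde, v, omega)\<close>
    and ass1_plant: "dISS (\<lambda>(xs::real^'n) (w::(real^'n) \<times> (real^'m) \<times> (real^'n)).
                      f xs + B *v (\<kappa> (xs - fst w) + fst (snd w)) + snd (snd w))"
    \<comment> \<open>attacked observer deltaISS w.r.t. input y^a and state xh\<close>
    and att_dISS: "dISS (\<lambda>(z::real^'n) (ya::real^'p).
                      f z + B *v \<kappa> z - L *v (C *v z + D *v \<kappa> z) + L *v ya)"
    and T_pos: "T > 0" and \<sigma>_pos: "\<sigma> > 0" and \<sigma>_le: "\<sigma> \<le> T"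
    \<comment> \<open>controller with v = 0, plant output, observer output\<close>
    and u_def: "\<forall>t. u t = \<kappa> (xh t)"
    and y_def: "\<forall>t. y t = C *v x t + D *v u t + \<nu> t"
    and yh_def: "\<forall>t. yh t = C *v xh t + D *v u t"
    \<comment> \<open>measurement received by the observer: true one before T, replayed on [T,2T)\<close>
    and ym_def: "\<forall>t. ym t = (if t < T then y t else y (t - T))"
    \<comment> \<open>plant trajectory on [0,2T)\<close>
    and plant: "\<forall>t\<in>{0..<2*T}. (\<lambda>s. f (x s) + B *v u s + \<omega> s) absolutely_integrable_on {0..t} \<and>
                  x t = x 0 + integral {0..t} (\<lambda>s. f (x s) + B *v u s + \<omega> s)"
    \<comment> \<open>observer trajectory driven by the received measurement on [0,2T)\<close>
    and observer: "\<forall>t\<in>{0..<2*T}. (\<lambda>s. f (xh s) + B *v u s + L *v (ym s - yh s)) absolutely_integrable_on {0..t} \<and>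
                  xh t = xh 0 + integral {0..t} (\<lambda>s. f (xh s) + B *v u s + L *v (ym s - yh s))"
  shows "\<exists>\<beta>b. class_KL \<beta>b \<and>
    (\<forall>t\<in>{T..<T+\<sigma>}. monitor \<sigma> (\<lambda>s. ym s - yh s) t \<le>
        (1/\<sigma>) * integral {t-\<sigma>..T} (\<lambda>s. (norm (y s - yh s))\<^sup>2)
      + (1/\<sigma>) * integral {T..t} (\<lambda>s. (norm (y (s-T) - yh (s-T)))\<^sup>2)
      + \<beta>b (norm (xh T - xh 0)) t) \<and>
    (\<forall>t\<in>{T+\<sigma>..<2*T}. monitor \<sigma> (\<lambda>s. ym s - yh s) t \<le>
        (1/\<sigma>) * integral {t-\<sigma>..t} (\<lambda>s. (norm (y (s-T) - yh (s-T)))\<^sup>2)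
      + \<beta>b (norm (xh T - xh 0)) t)"
proof -
  interpret replay_attack f B C D L \<kappa> l\<kappa> \<omega> \<nu> \<nu>b T x xh u y yh ym
    by unfold_locales (fact \<kappa>_lip \<nu>_int \<nu>_bd att_dISS T_pos u_def y_def yh_def ym_def plant observer)+
  obtain M where M: "\<And>s. s \<in> {0..T} \<Longrightarrow> norm (y s - yh s) \<le> M"
    using innovation_bounded unfolding bounded_iff by blast
  obtain Q where Q: "0 \<le> Q" "xh T = xh 0 \<Longrightarrow> Q = 0"
    "\<And>s. s \<in> {T..<2 * T} \<Longrightarrow> (norm (ym s - yh s))\<^sup>2 \<le> (norm (y (s - T) - yh (s - T)))\<^sup>2 + Q"
    using innovation_replay_bound by blast
  interpret replayed_signal "\<lambda>s. y s - yh s" "\<lambda>s. ym s - yh s" T M Q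
    by unfold_locales (fact innovation_integrable M replayed_innovation_integrable
        received_innovation_before_attack Q)+
  obtain \<beta>b where "class_KL \<beta>b" and Q_le: "\<And>t. t \<le> 2 * T \<Longrightarrow> Q \<le> \<beta>b (norm (xh T - xh 0)) t"
    using class_KL_dominates_const[of Q "norm (xh T - xh 0)" "2 * T"] Q(1,2) by auto
  note transition = order_trans[OF monitor_transition_le[OF \<sigma>_pos \<sigma>_le] add_left_mono[OF Q_le]]
    and replayed = order_trans[OF monitor_replayed_le[OF \<sigma>_pos] add_left_mono[OF Q_le]]
  show ?thesis
    using transition replayed \<sigma>_le \<open>class_KL \<beta>b\<close> by (intro exI[of _ \<beta>b]) force
qed

end
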